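(* Let $(\Omega,\mathcal{F})$ be a measurable space and $\mathcal{P}=\{P_1,\dots,P_K\}$ a finite set of probability measures on it, with $\hat{\mathbb{E}}[Z]=\max_{1\le i\le K}E_{P_i}[Z]$. Let $X,Y$ be random variables with $\hat{\mathbb{E}}[X^2]+\hat{\mathbb{E}}[Y^2]<\infty$, and set $a_i=E_{P_i}[X]$, $b_i=E_{P_i}[Y]$, $c_i=C_{P_i}(X,Y)$ for $1\le i\le K$. For $1\le i\le j\le K$ define $$q_{ij}(x)=\begin{cases}\dfrac{1}{b_j-b_i}\Big((x-b_i)(x-b_j)(a_i-a_j)+(x-b_i)(c_j-c_i)\Big)+c_i, & a_i\ne a_j\text{ and }b_i\ne b_j,\\ c_i, & \text{otherwise},\end{cases}$$ and $$\tilde{\mu}_{ij}=\begin{cases}\left(\left(\dfrac{c_j-c_i}{2(a_j-a_i)}+\dfrac{b_i+b_j}{2}\right)\vee\underline{b}_{ij}\right)\wedge\overline{b}_{ij}, & a_i\ne a_j\text{ and }b_i\ne b_j,\\ b_i, & \text{otherwise},\end{cases}$$ where $\underline{b}_{ij}=b_i\wedge b_j$ and $\overline{b}_{ij}=b_i\vee b_j$. Then $$\overline{C}(X,Y)=\max\Big\{\max_{1\le i\le K}C_{P_i}(X,Y),\ \max_{1\le i\le j\le K}q_{ij}(\tilde{\mu}_{ij})\Big\}.$$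
   Context: For a random variable $W$ with $\hat{\mathbb{E}}[W^2]<\infty$: $\overline{\mu}_W=\hat{\mathbb{E}}[W]$, $\underline{\mu}_W=-\hat{\mathbb{E}}[-W]$, $M_W=[\underline{\mu}_W,\overline{\mu}_W]$. Upper covariance $\overline{C}(X,Y)=\max_{\mu_2\in M_Y}\min_{\mu_1\in M_X}\hat{\mathbb{E}}[(X-\mu_1)(Y-\mu_2)]$. For a probability measure $P$, $C_P(X,Y)=E_P[(X-E_P[X])(Y-E_P[Y])]$. $\vee$ and $\wedge$ denote max and min. *)

theory Defs
  imports "HOL-Probability.Probability"
begin

definition sub_E :: "(nat \<Rightarrow> 'a measure) \<Rightarrow> nat \<Rightarrow> ('a \<Rightarrow> real) \<Rightarrow> real" where
  "sub_E P K Z = Max ((\<lambda>i. LINT \<omega>|P i. Z \<omega>) ` {1..K})"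

definition upper_mean :: "(nat \<Rightarrow> 'a measure) \<Rightarrow> nat \<Rightarrow> ('a \<Rightarrow> real) \<Rightarrow> real" where
  "upper_mean P K W = sub_E P K W"

definition lower_mean :: "(nat \<Rightarrow> 'a measure) \<Rightarrow> nat \<Rightarrow> ('a \<Rightarrow> real) \<Rightarrow> real" where
  "lower_mean P K W = - sub_E P K (\<lambda>\<omega>. - W \<omega>)"

text \<open>Upper covariance: max over mu2 in M_Y of min over mu1 in M_X
  (max/min over compact intervals of continuous functions, written as SUP/INF).\<close>
definition upper_cov :: "(nat \<Rightarrow> 'a measure) \<Rightarrow> nat \<Rightarrow> ('a \<Rightarrow> real) \<Rightarrow> ('a \<Rightarrow> real) \<Rightarrow> real" where
  "upper_cov P K X Y =
     (SUP \<mu>2 \<in> {lower_mean P K Y..upper_mean P K Y}.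
        INF \<mu>1 \<in> {lower_mean P K X..upper_mean P K X}.
          sub_E P K (\<lambda>\<omega>. (X \<omega> - \<mu>1) * (Y \<omega> - \<mu>2)))"

definition cov_P :: "'a measure \<Rightarrow> ('a \<Rightarrow> real) \<Rightarrow> ('a \<Rightarrow> real) \<Rightarrow> real" where
  "cov_P Q X Y = (LINT \<omega>|Q. (X \<omega> - (LINT \<omega>|Q. X \<omega>)) * (Y \<omega> - (LINT \<omega>|Q. Y \<omega>)))"

definition q_fun :: "real \<Rightarrow> real \<Rightarrow> real \<Rightarrow> real \<Rightarrow> real \<Rightarrow> real \<Rightarrow> real \<Rightarrow> real" where
  "q_fun ai aj bi bj ci cj x =
     (if ai \<noteq> aj \<and> bi \<noteq> bj
      then (1 / (bj - bi)) * ((x - bi) * (x - bj) * (ai - aj) + (x - bi) * (cj - ci)) + ci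
      else ci)"

definition mu_tilde :: "real \<Rightarrow> real \<Rightarrow> real \<Rightarrow> real \<Rightarrow> real \<Rightarrow> real \<Rightarrow> real" where
  "mu_tilde ai aj bi bj ci cj =
     (if ai \<noteq> aj \<and> bi \<noteq> bj
      then min (max ((cj - ci) / (2 * (aj - ai)) + (bi + bj) / 2) (min bi bj)) (max bi bj)
      else bi)"

end

theory Submission
  imports Defs
begin

text \<open>Under \<open>P k\<close> the mean of \<open>(X - m1) * (Y - m2)\<close> is \<open>c k + (a k - m1) * (b k - m2)\<close>,
  so the upper covariance is a sup-inf of the upper envelope of finitely many lines.
  For fixed \<open>m2 = x\<close> each constraint \<open>c k + (a k - m) * (b k - x) \<le> R\<close> is a half-line in \<open>m\<close>,
  so a common \<open>m\<close> exists once the constraints are compatible in pairs. For \<open>b j < x < b i\<close>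
  this compatibility says \<open>q_ij(x) \<le> R\<close>, because \<open>q_ij(x)\<close> is the convex combination of the
  lines \<open>i\<close> and \<open>j\<close> in which \<open>m\<close> cancels. Between \<open>b i\<close> and \<open>b j\<close> the quadratic \<open>q_ij\<close> is
  bounded by \<open>max (c i) (c j)\<close> if it is convex and by its value at the clamped vertex
  \<open>mu_tilde_ij\<close> if it is concave; since \<open>c k = q_kk(mu_tilde_kk)\<close>, the maximum of
  \<open>q_ij(mu_tilde_ij)\<close> over \<open>i \<le> j\<close> is an admissible \<open>R\<close>. Conversely, at \<open>m2 = mu_tilde_ij\<close>
  every \<open>m1\<close> leaves one of the lines \<open>i\<close>, \<open>j\<close> at least at \<open>q_ij(mu_tilde_ij)\<close>.\<close>

text \<open>\<open>q_poly\<close> is \<open>q_fun\<close> without its case split; for \<open>ai = aj\<close> it is the chord through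
  \<open>(bi, ci)\<close> and \<open>(bj, cj)\<close>, which is what the pairwise argument needs.\<close>

definition q_poly :: "real \<Rightarrow> real \<Rightarrow> real \<Rightarrow> real \<Rightarrow> real \<Rightarrow> real \<Rightarrow> real \<Rightarrow> real" where
  "q_poly ai aj bi bj ci cj x =
     (1 / (bj - bi)) * ((x - bi) * (x - bj) * (ai - aj) + (x - bi) * (cj - ci)) + ci"

definition q_tilde :: "('i \<Rightarrow> real) \<Rightarrow> ('i \<Rightarrow> real) \<Rightarrow> ('i \<Rightarrow> real) \<Rightarrow> 'i \<Rightarrow> 'i \<Rightarrow> real" where
  "q_tilde a b c i j =
     q_fun (a i) (a j) (b i) (b j) (c i) (c j) (mu_tilde (a i) (a j) (b i) (b j) (c i) (c j))"

lemma q_fun_eq_q_poly: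
  "ai \<noteq> aj \<Longrightarrow> bi \<noteq> bj \<Longrightarrow> q_fun ai aj bi bj ci cj x = q_poly ai aj bi bj ci cj x"
  by (simp add: q_fun_def q_poly_def)

lemma q_tilde_diag: "q_tilde a b c k k = c k"
  by (simp add: q_tilde_def q_fun_def)

lemma mu_tilde_between: "mu_tilde ai aj bi bj ci cj \<in> {min bi bj..max bi bj}"
  by (auto simp: mu_tilde_def)

lemma mu_tilde_swap:
  assumes "ai \<noteq> aj" "bi \<noteq> bj"
  shows "mu_tilde ai aj bi bj ci cj = mu_tilde aj ai bj bi cj ci"
proof -
  have "(cj - ci) / (2 * (aj - ai)) = (ci - cj) / (2 * (ai - aj))"
    by (simp add: divide_simps) (simp add: algebra_simps)
  then show ?thesis
    using assms by (simp add: mu_tilde_def min.commute max.commute add.commute)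
qed

lemma q_poly_swap:
  assumes "bi \<noteq> bj"
  shows "q_poly ai aj bi bj ci cj x = q_poly aj ai bj bi cj ci x"
proof -
  have "bj - bi \<noteq> 0" "bi - bj \<noteq> 0" using assms by simp_all
  then show ?thesis unfolding q_poly_def by (simp add: divide_simps) (simp add: algebra_simps)
qed

lemma q_tilde_swap:
  assumes "a i \<noteq> a j" "b i \<noteq> b j"
  shows "q_tilde a b c i j = q_tilde a b c j i"
  using assms by (simp add: q_tilde_def q_fun_eq_q_poly q_poly_swap mu_tilde_swap)

lemma q_poly_convex_combination:
  assumes "bi \<noteq> bj"
  shows "q_poly ai aj bi bj ci cj x =
    (bj - x) / (bj - bi) * (ci + (ai - m) * (bi - x)) + (x - bi) / (bj - bi) * (cj + (aj - m) * (bj - x))"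
proof -
  have "bj - bi \<noteq> 0" using assms by simp
  then show ?thesis unfolding q_poly_def by (simp add: divide_simps) (simp add: algebra_simps)
qed

lemma q_poly_parabola:
  assumes "bi \<noteq> bj"
  shows "q_poly ai aj bi bj ci cj x =
    (ai - aj) / (bj - bi) * ((x - bi) * (x - bj)) + ((bj - x) / (bj - bi) * ci + (x - bi) / (bj - bi) * cj)"
proof -
  have "bj - bi \<noteq> 0" using assms by simp
  then show ?thesis unfolding q_poly_def by (simp add: divide_simps) (simp add: algebra_simps)
qed

lemma q_poly_diff_vertex:
  fixes ai aj bi bj ci cj x y :: real
  assumes "bi \<noteq> bj" "ai \<noteq> aj"
  defines "v \<equiv> (cj - ci) / (2 * (aj - ai)) + (bi + bj) / 2"
  shows "q_poly ai aj bi bj ci cj x - q_poly ai aj bi bj ci cj y =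
    (ai - aj) / (bj - bi) * ((x - v)\<^sup>2 - (y - v)\<^sup>2)"
proof -
  have "bj - bi \<noteq> 0" "aj - ai \<noteq> 0" using assms by simp_all
  then show ?thesis
    unfolding v_def q_poly_def by (simp add: divide_simps power2_eq_square) (simp add: algebra_simps)
qed

lemma interpolation_weights:
  fixes bi bj x :: real
  assumes "bi \<noteq> bj" "x \<in> {min bi bj..max bi bj}"
  shows "(bj - x) / (bj - bi) \<ge> 0" "(x - bi) / (bj - bi) \<ge> 0"
    "(bj - x) / (bj - bi) + (x - bi) / (bj - bi) = 1"
  using assms by (auto simp: zero_le_divide_iff divide_simps min_def max_def split: if_splits)

lemma q_poly_le_max_lines:
  assumes "bi \<noteq> bj" "x \<in> {min bi bj..max bi bj}"
  shows "q_poly ai aj bi bj ci cj x \<le> max (ci + (ai - m) * (bi - x)) (cj + (aj - m) * (bj - x))"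
  unfolding q_poly_convex_combination[OF assms(1), where m = m]
  using interpolation_weights[OF assms] by (intro convex_bound_le) auto

lemma q_poly_le_max_if_convex:
  assumes "bi \<noteq> bj" "x \<in> {min bi bj..max bi bj}" "(ai - aj) / (bj - bi) \<ge> 0"
  shows "q_poly ai aj bi bj ci cj x \<le> max ci cj"
proof -
  have "(x - bi) * (x - bj) \<le> 0"
    using assms(2) by (auto simp: mult_le_0_iff min_def max_def split: if_splits)
  then have "(ai - aj) / (bj - bi) * ((x - bi) * (x - bj)) \<le> 0"
    by (rule mult_nonneg_nonpos[OF assms(3)])
  moreover have "(bj - x) / (bj - bi) * ci + (x - bi) / (bj - bi) * cj \<le> max ci cj"
    using interpolation_weights[OF assms(1,2)] by (intro convex_bound_le) auto
  ultimately show ?thesis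
    unfolding q_poly_parabola[OF assms(1)] by linarith
qed

lemma q_poly_le_at_mu_tilde_if_concave:
  assumes "bi \<noteq> bj" "ai \<noteq> aj" "x \<in> {min bi bj..max bi bj}" "(ai - aj) / (bj - bi) < 0"
  shows "q_poly ai aj bi bj ci cj x \<le> q_poly ai aj bi bj ci cj (mu_tilde ai aj bi bj ci cj)"
proof -
  define v where "v = (cj - ci) / (2 * (aj - ai)) + (bi + bj) / 2"
  define y where "y = mu_tilde ai aj bi bj ci cj"
  have "y = min (max v (min bi bj)) (max bi bj)"
    using assms(1,2) by (simp add: y_def mu_tilde_def v_def)
  then have "\<bar>y - v\<bar> \<le> \<bar>x - v\<bar>"
    using assms(3) by (auto simp: min_def max_def split: if_splits)
  then have "(y - v)\<^sup>2 \<le> (x - v)\<^sup>2"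
    by (simp add: abs_le_square_iff)
  then have "(ai - aj) / (bj - bi) * ((x - v)\<^sup>2 - (y - v)\<^sup>2) \<le> 0"
    using assms(4) by (intro mult_nonpos_nonneg) auto
  then show ?thesis
    using q_poly_diff_vertex[OF assms(1,2), of ci cj x y] by (simp add: y_def v_def)
qed

lemma q_poly_le_bound:
  assumes "bi \<noteq> bj" "x \<in> {min bi bj..max bi bj}" "ci \<le> R" "cj \<le> R"
    and "ai \<noteq> aj \<Longrightarrow> q_fun ai aj bi bj ci cj (mu_tilde ai aj bi bj ci cj) \<le> R"
  shows "q_poly ai aj bi bj ci cj x \<le> R"
proof (cases "(ai - aj) / (bj - bi) \<ge> 0")
  case True
  have "q_poly ai aj bi bj ci cj x \<le> max ci cj"
    by (rule q_poly_le_max_if_convex[OF assms(1,2) True])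
  also have "\<dots> \<le> R" using assms(3,4) by simp
  finally show ?thesis .
next
  case False
  then have "ai \<noteq> aj" by auto
  have "q_poly ai aj bi bj ci cj x \<le> q_poly ai aj bi bj ci cj (mu_tilde ai aj bi bj ci cj)"
    using False by (intro q_poly_le_at_mu_tilde_if_concave[OF assms(1) \<open>ai \<noteq> aj\<close> assms(2)]) simp
  also have "\<dots> = q_fun ai aj bi bj ci cj (mu_tilde ai aj bi bj ci cj)"
    by (simp add: q_fun_eq_q_poly[OF \<open>ai \<noteq> aj\<close> assms(1)])
  also have "\<dots> \<le> R" by (rule assms(5)[OF \<open>ai \<noteq> aj\<close>])
  finally show ?thesis .
qed

lemma q_tilde_le_max_lines:
  fixes a b c :: "'i \<Rightarrow> real" and i j :: 'i and m :: real
  defines "y \<equiv> mu_tilde (a i) (a j) (b i) (b j) (c i) (c j)"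
  shows "q_tilde a b c i j \<le> max (c i + (a i - m) * (b i - y)) (c j + (a j - m) * (b j - y))"
proof (cases "a i \<noteq> a j \<and> b i \<noteq> b j")
  case True
  then show ?thesis
    unfolding q_tilde_def y_def q_fun_eq_q_poly[OF conjunct1[OF True] conjunct2[OF True]]
    by (intro q_poly_le_max_lines mu_tilde_between) auto
next
  case False
  then show ?thesis
    by (auto simp: q_tilde_def y_def q_fun_def mu_tilde_def)
qed

lemma line_bounds_compatible:
  fixes ai aj bi bj ci cj x R :: real
  assumes "bj < x" "x < bi"
    and "(ai - aj) * (bi - x) * (x - bj) \<le> (R - ci) * (x - bj) + (R - cj) * (bi - x)"
  shows "ai - (R - ci) / (bi - x) \<le> aj + (R - cj) / (x - bj)"
proof -
  have p: "bi - x > 0" and q: "x - bj > 0" using assms(1,2) by simp_all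
  have "ai - aj \<le> ((R - ci) * (x - bj) + (R - cj) * (bi - x)) / ((bi - x) * (x - bj))"
    using assms(3) p q by (simp add: pos_le_divide_eq mult.assoc)
  also have "\<dots> = (R - ci) / (bi - x) + (R - cj) / (x - bj)"
    using p q by (simp add: field_simps)
  finally show ?thesis by simp
qed

lemma ex_all_lines_le_if_pairwise:
  fixes a b c :: "'i \<Rightarrow> real"
  assumes "finite I"
    and a: "\<And>k. k \<in> I \<Longrightarrow> a k \<in> {al..au}" and "al \<le> au"
    and c: "\<And>k. k \<in> I \<Longrightarrow> c k \<le> R"
    and pair: "\<And>i j. i \<in> I \<Longrightarrow> j \<in> I \<Longrightarrow> b j < x \<Longrightarrow> x < b i \<Longrightarrow>
       (a i - a j) * (b i - x) * (x - b j) \<le> (R - c i) * (x - b j) + (R - c j) * (b i - x)"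
  shows "\<exists>m\<in>{al..au}. \<forall>k\<in>I. c k + (a k - m) * (b k - x) \<le> R"
proof -
  \<comment> \<open>line \<open>k\<close> confines \<open>m\<close> to \<open>[lo k, \<infinity>)\<close> if \<open>x < b k\<close> and to \<open>(-\<infinity>, hi k]\<close> if \<open>b k < x\<close>\<close>
  define lo where "lo k = (if x < b k then a k - (R - c k) / (b k - x) else al)" for k
  define hi where "hi k = (if b k < x then a k + (R - c k) / (x - b k) else au)" for k
  have lo_au: "lo k \<le> au" if "k \<in> I" for k
  proof (cases "x < b k")
    case True
    then have "(R - c k) / (b k - x) \<ge> 0" using c[OF that] by simp
    then show ?thesis using a[OF that] True by (simp add: lo_def)
  qed (use \<open>al \<le> au\<close> in \<open>simp add: lo_def\<close>)
  have al_hi: "al \<le> hi k" if "k \<in> I" for k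
  proof (cases "b k < x")
    case True
    then have "(R - c k) / (x - b k) \<ge> 0" using c[OF that] by simp
    then show ?thesis using a[OF that] True by (simp add: hi_def)
  qed (use \<open>al \<le> au\<close> in \<open>simp add: hi_def\<close>)
  have lo_hi: "lo i \<le> hi j" if "i \<in> I" "j \<in> I" for i j
    using line_bounds_compatible[OF _ _ pair[OF that]] lo_au[OF that(1)] al_hi[OF that(2)] \<open>al \<le> au\<close>
    by (auto simp: lo_def hi_def)
  define m where "m = Max (insert al (lo ` I))"
  have m: "m \<in> {al..au}" "\<And>k. k \<in> I \<Longrightarrow> lo k \<le> m \<and> m \<le> hi k"
    using \<open>finite I\<close> \<open>al \<le> au\<close> lo_au al_hi lo_hi by (auto simp: m_def)
  have "c k + (a k - m) * (b k - x) \<le> R" if k: "k \<in> I" for k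
  proof -
    consider "x < b k" | "b k < x" | "b k = x" by linarith
    then show ?thesis
    proof cases
      case 1
      then have "a k - m \<le> (R - c k) / (b k - x)" using m(2)[OF k] by (simp add: lo_def)
      with 1 show ?thesis by (simp add: pos_le_divide_eq)
    next
      case 2
      then have "m - a k \<le> (R - c k) / (x - b k)" using m(2)[OF k] by (simp add: hi_def)
      with 2 have "(m - a k) * (x - b k) \<le> R - c k" by (simp add: pos_le_divide_eq)
      then show ?thesis by (simp add: algebra_simps)
    next
      case 3
      then show ?thesis using c[OF k] by simp
    qed
  qed
  then show ?thesis using m(1) by blast
qed

lemma pair_constraint_if_q_poly_le:
  fixes ai aj bi bj ci cj x R :: real
  assumes "bj < x" "x < bi" "q_poly ai aj bi bj ci cj x \<le> R"
  shows "(ai - aj) * (bi - x) * (x - bj) \<le> (R - ci) * (x - bj) + (R - cj) * (bi - x)"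
proof -
  have "bj - bi \<noteq> 0" using assms(1,2) by simp
  then have "q_poly ai aj bi bj ci cj x * (bi - bj) =
      ci * (x - bj) + cj * (bi - x) + (ai - aj) * (bi - x) * (x - bj)"
    unfolding q_poly_def by (simp add: divide_simps) (simp add: algebra_simps)
  moreover have "q_poly ai aj bi bj ci cj x * (bi - bj) \<le> R * (bi - bj)"
    using assms by (intro mult_right_mono) auto
  ultimately show ?thesis by (simp add: algebra_simps)
qed

lemma SUP_INF_eqI:
  fixes F :: "'a \<Rightarrow> 'b \<Rightarrow> real"
  assumes "A \<noteq> {}"
    and bdd: "\<And>y. y \<in> B \<Longrightarrow> bdd_below ((\<lambda>x. F x y) ` A)"
    and upper: "\<And>y. y \<in> B \<Longrightarrow> \<exists>x\<in>A. F x y \<le> R"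
    and lower: "\<exists>y\<in>B. \<forall>x\<in>A. R \<le> F x y"
  shows "(SUP y\<in>B. INF x\<in>A. F x y) = R"
proof -
  have inf_le: "(INF x\<in>A. F x y) \<le> R" if "y \<in> B" for y
    using upper[OF that] cINF_lower[OF bdd[OF that]] by (meson order_trans)
  from lower obtain y0 where y0: "y0 \<in> B" "\<forall>x\<in>A. R \<le> F x y0" by blast
  then have "R \<le> (INF x\<in>A. F x y0)"
    using \<open>A \<noteq> {}\<close> by (intro cINF_greatest) auto
  then have "R \<le> (SUP y\<in>B. INF x\<in>A. F x y)"
    using y0(1) inf_le by (intro cSUP_upper2[where x = y0] bdd_aboveI2) auto
  moreover have "(SUP y\<in>B. INF x\<in>A. F x y) \<le> R"
    using y0(1) inf_le by (intro cSUP_least) auto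
  ultimately show ?thesis by simp
qed

lemma bdd_below_Max_lines:
  fixes a b c :: "'i \<Rightarrow> real"
  assumes "finite I" "k \<in> I"
  shows "bdd_below ((\<lambda>m. Max ((\<lambda>k. c k + (a k - m) * (b k - x)) ` I)) ` {al..au})"
proof -
  have "compact ((\<lambda>m. c k + (a k - m) * (b k - x)) ` {al..au})"
    by (intro compact_continuous_image continuous_intros compact_Icc)
  from bounded_imp_bdd_below[OF compact_imp_bounded[OF this]]
  obtain L where "\<And>m. m \<in> {al..au} \<Longrightarrow> L \<le> c k + (a k - m) * (b k - x)"
    unfolding bdd_below_def by blast
  then show ?thesis
    using assms by (intro bdd_belowI2[where m = L]) (force intro: order_trans[OF _ Max_ge])
qed

definition max_q_tilde :: "('i::linorder \<Rightarrow> real) \<Rightarrow> ('i \<Rightarrow> real) \<Rightarrow> ('i \<Rightarrow> real) \<Rightarrow> 'i set \<Rightarrow> real" where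
  "max_q_tilde a b c I = Max ((\<lambda>(i, j). q_tilde a b c i j) ` {(i, j) \<in> I \<times> I. i \<le> j})"

lemma finite_ordered_pairs: "finite I \<Longrightarrow> finite {(i, j) \<in> I \<times> I. i \<le> j}"
  by (rule finite_subset[of _ "I \<times> I"]) auto

lemma q_tilde_le_max_q_tilde:
  "finite I \<Longrightarrow> i \<in> I \<Longrightarrow> j \<in> I \<Longrightarrow> i \<le> j \<Longrightarrow> q_tilde a b c i j \<le> max_q_tilde a b c I"
  unfolding max_q_tilde_def by (intro Max_ge finite_imageI finite_ordered_pairs) auto

lemma c_le_max_q_tilde: "finite I \<Longrightarrow> k \<in> I \<Longrightarrow> c k \<le> max_q_tilde a b c I"
  using q_tilde_le_max_q_tilde[of I k k] by (simp add: q_tilde_diag)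

lemma max_q_tilde_attained:
  assumes "finite I" "I \<noteq> {}"
  obtains i j where "i \<in> I" "j \<in> I" "max_q_tilde a b c I = q_tilde a b c i j"
proof -
  have "max_q_tilde a b c I \<in> (\<lambda>(i, j). q_tilde a b c i j) ` {(i, j) \<in> I \<times> I. i \<le> j}"
    unfolding max_q_tilde_def using assms by (intro Max_in finite_imageI finite_ordered_pairs) auto
  then show ?thesis using that by auto
qed

lemma ex_lines_le_max_q_tilde:
  fixes a b c :: "'i::linorder \<Rightarrow> real"
  assumes I: "finite I" and a: "\<And>k. k \<in> I \<Longrightarrow> a k \<in> {al..au}" and "al \<le> au"
  shows "\<exists>m\<in>{al..au}. \<forall>k\<in>I. c k + (a k - m) * (b k - x) \<le> max_q_tilde a b c I"
proof (rule ex_all_lines_le_if_pairwise[OF I a \<open>al \<le> au\<close>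
      c_le_max_q_tilde[where a = a and b = b and c = c, OF I]])
  let ?R = "max_q_tilde a b c I"
  fix i j
  assume ij: "i \<in> I" "j \<in> I" and x: "b j < x" "x < b i"
  show "(a i - a j) * (b i - x) * (x - b j) \<le> (?R - c i) * (x - b j) + (?R - c j) * (b i - x)"
  proof (rule pair_constraint_if_q_poly_le[OF x q_poly_le_bound])
    show "b i \<noteq> b j" "x \<in> {min (b i) (b j)..max (b i) (b j)}" using x by auto
    show "c i \<le> ?R" "c j \<le> ?R" using c_le_max_q_tilde[where a = a and b = b and c = c, OF I] ij by auto
    assume "a i \<noteq> a j"
    have "q_tilde a b c i j \<le> ?R"
    proof (cases "i \<le> j")
      case True
      then show ?thesis by (rule q_tilde_le_max_q_tilde[OF I ij])
    next
      case False
      then have "q_tilde a b c j i \<le> ?R" by (intro q_tilde_le_max_q_tilde[OF I ij(2,1)]) simp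
      then show ?thesis by (simp only: q_tilde_swap[OF \<open>a i \<noteq> a j\<close> \<open>b i \<noteq> b j\<close>])
    qed
    then show "q_fun (a i) (a j) (b i) (b j) (c i) (c j) (mu_tilde (a i) (a j) (b i) (b j) (c i) (c j)) \<le> ?R"
      by (simp only: q_tilde_def)
  qed
qed

lemma ex_max_q_tilde_le_lines:
  fixes a b c :: "'i::linorder \<Rightarrow> real"
  assumes I: "finite I" "I \<noteq> {}" and b: "\<And>k. k \<in> I \<Longrightarrow> b k \<in> {bl..bu}"
  shows "\<exists>y\<in>{bl..bu}. \<forall>m. max_q_tilde a b c I \<le> Max ((\<lambda>k. c k + (a k - m) * (b k - y)) ` I)"
proof -
  obtain i j where ij: "i \<in> I" "j \<in> I" "max_q_tilde a b c I = q_tilde a b c i j"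
    using max_q_tilde_attained[OF I] .
  define y where "y = mu_tilde (a i) (a j) (b i) (b j) (c i) (c j)"
  have "y \<in> {bl..bu}"
    using mu_tilde_between[of "a i" "a j" "b i" "b j" "c i" "c j"] b[OF ij(1)] b[OF ij(2)]
    by (auto simp: y_def)
  moreover have "max_q_tilde a b c I \<le> Max ((\<lambda>k. c k + (a k - m) * (b k - y)) ` I)" for m
  proof -
    have "max_q_tilde a b c I \<le> max (c i + (a i - m) * (b i - y)) (c j + (a j - m) * (b j - y))"
      unfolding ij(3) y_def by (rule q_tilde_le_max_lines)
    also have "\<dots> \<le> Max ((\<lambda>k. c k + (a k - m) * (b k - y)) ` I)"
      using I ij by (intro max.boundedI Max_ge) auto
    finally show ?thesis .
  qed
  ultimately show ?thesis by blast
qed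

lemma SUP_INF_Max_lines_eq_max_q_tilde:
  fixes a b c :: "'i::linorder \<Rightarrow> real"
  assumes I: "finite I" "I \<noteq> {}"
    and a: "\<And>k. k \<in> I \<Longrightarrow> a k \<in> {al..au}" and b: "\<And>k. k \<in> I \<Longrightarrow> b k \<in> {bl..bu}"
  shows "(SUP m2\<in>{bl..bu}. INF m1\<in>{al..au}. Max ((\<lambda>k. c k + (a k - m1) * (b k - m2)) ` I)) =
    max_q_tilde a b c I"
proof -
  obtain k0 where "k0 \<in> I" using I by blast
  then have "al \<le> au" using a by fastforce
  show ?thesis
  proof (rule SUP_INF_eqI)
    show "{al..au} \<noteq> {}" using \<open>al \<le> au\<close> by simp
    show "bdd_below ((\<lambda>m1. Max ((\<lambda>k. c k + (a k - m1) * (b k - m2)) ` I)) ` {al..au})" for m2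
      by (rule bdd_below_Max_lines[OF I(1) \<open>k0 \<in> I\<close>])
    show "\<exists>m1\<in>{al..au}. Max ((\<lambda>k. c k + (a k - m1) * (b k - m2)) ` I) \<le> max_q_tilde a b c I" for m2
      using ex_lines_le_max_q_tilde[where b = b and c = c and x = m2, OF I(1) a \<open>al \<le> au\<close>] I
      by (auto intro: Max.boundedI)
    show "\<exists>m2\<in>{bl..bu}. \<forall>m1\<in>{al..au}.
        max_q_tilde a b c I \<le> Max ((\<lambda>k. c k + (a k - m1) * (b k - m2)) ` I)"
      using ex_max_q_tilde_le_lines[where a = a and b = b and c = c, OF I b] by blast
  qed
qed

lemma integrable_mult_if_square_integrable:
  fixes f g :: "'a \<Rightarrow> real"
  assumes "f \<in> borel_measurable M" "g \<in> borel_measurable M"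
    and "integrable M (\<lambda>x. (f x)\<^sup>2)" "integrable M (\<lambda>x. (g x)\<^sup>2)"
  shows "integrable M (\<lambda>x. f x * g x)"
proof (rule Bochner_Integration.integrable_bound[OF Bochner_Integration.integrable_add[OF assms(3,4)]])
  show "(\<lambda>x. f x * g x) \<in> borel_measurable M"
    using assms(1,2) by measurable
  have "\<bar>f x * g x\<bar> \<le> (f x)\<^sup>2 + (g x)\<^sup>2" for x
  proof -
    have "2 * \<bar>f x * g x\<bar> \<le> (f x)\<^sup>2 + (g x)\<^sup>2"
      using sum_squares_bound[of "\<bar>f x\<bar>" "\<bar>g x\<bar>"] by (simp add: abs_mult mult.assoc)
    then show ?thesis using abs_ge_zero[of "f x * g x"] by linarith
  qed
  then show "AE x in M. norm (f x * g x) \<le> norm ((f x)\<^sup>2 + (g x)\<^sup>2)"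
    by simp
qed

lemma (in prob_space) integral_shifted_product:
  fixes X Y :: "'a \<Rightarrow> real"
  assumes "X \<in> borel_measurable M" "integrable M (\<lambda>\<omega>. (X \<omega>)\<^sup>2)"
    and "Y \<in> borel_measurable M" "integrable M (\<lambda>\<omega>. (Y \<omega>)\<^sup>2)"
  shows "(LINT \<omega>|M. (X \<omega> - m1) * (Y \<omega> - m2)) =
    cov_P M X Y + (expectation X - m1) * (expectation Y - m2)"
proof -
  have X: "integrable M X" and Y: "integrable M Y"
    using assms square_integrable_imp_integrable by auto
  have XY: "integrable M (\<lambda>\<omega>. X \<omega> * Y \<omega>)"
    using assms by (intro integrable_mult_if_square_integrable)
  have expand: "(LINT \<omega>|M. (X \<omega> - u) * (Y \<omega> - v)) =
      (LINT \<omega>|M. X \<omega> * Y \<omega>) - v * expectation X - u * expectation Y + u * v" for u v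
  proof -
    have "(LINT \<omega>|M. (X \<omega> - u) * (Y \<omega> - v)) =
        (LINT \<omega>|M. X \<omega> * Y \<omega> - v * X \<omega> - u * Y \<omega> + u * v)"
      by (simp add: algebra_simps)
    also have "\<dots> = (LINT \<omega>|M. X \<omega> * Y \<omega>) - v * expectation X - u * expectation Y + u * v"
      using X Y XY by (simp add: prob_space)
    finally show ?thesis .
  qed
  show ?thesis
    unfolding cov_P_def expand by (simp add: algebra_simps)
qed

lemma lower_mean_eq_Min:
  assumes "K \<ge> 1"
  shows "lower_mean P K W = Min ((\<lambda>i. LINT \<omega>|P i. W \<omega>) ` {1..K})"
  using assms by (simp add: lower_mean_def sub_E_def image_image)

theorem theorem4p4:
  fixes M :: "'a measure" and P :: "nat \<Rightarrow> 'a measure" and K :: nat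
    and X Y :: "'a \<Rightarrow> real"
  assumes K: "K \<ge> 1"
    and prob: "\<And>i. i \<in> {1..K} \<Longrightarrow> prob_space (P i)"
    and sets: "\<And>i. i \<in> {1..K} \<Longrightarrow> sets (P i) = sets M"
    and X: "X \<in> borel_measurable M" and Y: "Y \<in> borel_measurable M"
    and X2: "\<And>i. i \<in> {1..K} \<Longrightarrow> integrable (P i) (\<lambda>\<omega>. (X \<omega>)\<^sup>2)"
    and Y2: "\<And>i. i \<in> {1..K} \<Longrightarrow> integrable (P i) (\<lambda>\<omega>. (Y \<omega>)\<^sup>2)"
  defines "a \<equiv> (\<lambda>i. LINT \<omega>|P i. X \<omega>)"
    and "b \<equiv> (\<lambda>i. LINT \<omega>|P i. Y \<omega>)"
    and "c \<equiv> (\<lambda>i. cov_P (P i) X Y)"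
  shows "upper_cov P K X Y =
    max (Max ((\<lambda>i. cov_P (P i) X Y) ` {1..K}))
        (Max ((\<lambda>(i, j). q_fun (a i) (a j) (b i) (b j) (c i) (c j)
                          (mu_tilde (a i) (a j) (b i) (b j) (c i) (c j)))
              ` {(i, j). 1 \<le> i \<and> i \<le> j \<and> j \<le> K}))"
proof -
  let ?I = "{1..K}"
  have I: "finite ?I" "?I \<noteq> {}" using K by auto
  have pairs: "{(i, j) \<in> ?I \<times> ?I. i \<le> j} = {(i, j). 1 \<le> i \<and> i \<le> j \<and> j \<le> K}"
    by auto
  have lines: "sub_E P K (\<lambda>\<omega>. (X \<omega> - m1) * (Y \<omega> - m2)) =
      Max ((\<lambda>k. c k + (a k - m1) * (b k - m2)) ` ?I)" for m1 m2
    unfolding sub_E_def a_def b_def c_def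
    using X Y X2 Y2 by (intro arg_cong[where f = Max] image_cong refl prob_space.integral_shifted_product)
      (auto simp: prob measurable_cong_sets[OF sets refl])
  have "upper_cov P K X Y =
      (SUP m2\<in>{Min (b ` ?I)..Max (b ` ?I)}. INF m1\<in>{Min (a ` ?I)..Max (a ` ?I)}.
        Max ((\<lambda>k. c k + (a k - m1) * (b k - m2)) ` ?I))"
    unfolding upper_cov_def lines lower_mean_eq_Min[OF K]
    by (simp add: upper_mean_def sub_E_def a_def b_def)
  also have "\<dots> = max_q_tilde a b c ?I"
    using I by (intro SUP_INF_Max_lines_eq_max_q_tilde) auto
  also have "\<dots> = max (Max (c ` ?I)) (max_q_tilde a b c ?I)"
    using I c_le_max_q_tilde[OF I(1)] by (simp add: max_absorb2)
  finally show ?thesis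
    unfolding max_q_tilde_def q_tilde_def pairs by (simp add: c_def)
qed

end
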